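(* Let $P$ be a finite poset and $R$ an indecomposable commutative unital ring. Then the group $\mathrm{Aut}(I^3(P,R))$ of $R$-linear algebra automorphisms of $I^3(P,R)$ is isomorphic to the automorphism group $\mathrm{Aut}(P)$ of the poset $P$.
   Context: A commutative ring $R$ is indecomposable if its only idempotents are $0$ and $1$. For a finite poset $P$, let $P^3_\le=\{(x,y,z)\in P^3: x\le y\le z\}$. The third partial flag incidence algebra $I^3(P,R)$ is the $R$-module of all functions $f:P^3_\le\to R$ (pointwise operations) with the (non-associative) multiplication $(fg)(x_1,x_2,x_3)=\sum f(x_1,y_1,y_2)\,g(y_1,y_2,x_3)$, the sum over all $y_1,y_2$ with $x_1\le y_1\le x_2\le y_2\le x_3$. *)

theory Defs
  imports "HOL-Algebra.Group" "HOL-Library.FuncSet"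
begin

definition indecomposable_ring :: "'r::comm_ring_1 itself \<Rightarrow> bool" where
  "indecomposable_ring _ \<longleftrightarrow> (0::'r) \<noteq> 1 \<and> (\<forall>e::'r. e * e = e \<longrightarrow> e = 0 \<or> e = 1)"

text \<open>The carrier of the third partial flag incidence algebra: functions on
  the triples x \<le> y \<le> z (represented as functions on all triples vanishing elsewhere).\<close>
definition I3 :: "('a::{finite,order} \<times> 'a \<times> 'a \<Rightarrow> 'r::comm_ring_1) set" where
  "I3 = {f. \<forall>x y z. \<not> (x \<le> y \<and> y \<le> z) \<longrightarrow> f (x, y, z) = 0}"

definition I3_mult :: "('a::{finite,order} \<times> 'a \<times> 'a \<Rightarrow> 'r::comm_ring_1)
    \<Rightarrow> ('a \<times> 'a \<times> 'a \<Rightarrow> 'r) \<Rightarrow> ('a \<times> 'a \<times> 'a \<Rightarrow> 'r)" where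
  "I3_mult f g = (\<lambda>(x1, x2, x3).
     if x1 \<le> x2 \<and> x2 \<le> x3 then
       (\<Sum>(y1, y2) \<in> {(y1, y2). x1 \<le> y1 \<and> y1 \<le> x2 \<and> x2 \<le> y2 \<and> y2 \<le> x3}.
          f (x1, y1, y2) * g (y1, y2, x3))
     else 0)"

definition I3_smult :: "'r::comm_ring_1 \<Rightarrow> ('a \<times> 'a \<times> 'a \<Rightarrow> 'r) \<Rightarrow> ('a \<times> 'a \<times> 'a \<Rightarrow> 'r)" where
  "I3_smult r f = (\<lambda>t. r * f t)"

definition I3_auts :: "(('a::{finite,order} \<times> 'a \<times> 'a \<Rightarrow> 'r::comm_ring_1)
    \<Rightarrow> ('a \<times> 'a \<times> 'a \<Rightarrow> 'r)) set" where
  "I3_auts = {\<phi>. \<phi> \<in> extensional I3 \<and> bij_betw \<phi> I3 I3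
     \<and> (\<forall>f\<in>I3. \<forall>g\<in>I3. \<phi> (\<lambda>t. f t + g t) = (\<lambda>t. \<phi> f t + \<phi> g t))
     \<and> (\<forall>r. \<forall>f\<in>I3. \<phi> (I3_smult r f) = I3_smult r (\<phi> f))
     \<and> (\<forall>f\<in>I3. \<forall>g\<in>I3. \<phi> (I3_mult f g) = I3_mult (\<phi> f) (\<phi> g))}"

definition Aut_I3 :: "('a::{finite,order} \<times> 'a \<times> 'a \<Rightarrow> 'r::comm_ring_1) itself
    \<Rightarrow> (('a \<times> 'a \<times> 'a \<Rightarrow> 'r) \<Rightarrow> ('a \<times> 'a \<times> 'a \<Rightarrow> 'r)) monoid" where
  "Aut_I3 _ = \<lparr>carrier = I3_auts, mult = (\<lambda>\<phi> \<psi>. compose I3 \<phi> \<psi>),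
              one = (\<lambda>f\<in>I3. f)\<rparr>"

definition Aut_poset :: "'a::order itself \<Rightarrow> ('a \<Rightarrow> 'a) monoid" where
  "Aut_poset _ = \<lparr>carrier = {\<sigma>. bij \<sigma> \<and> (\<forall>x y. x \<le> y \<longleftrightarrow> \<sigma> x \<le> \<sigma> y)},
                  mult = (\<circ>), one = id\<rparr>"

end

(*
  Write e_t for the indicator of the triple t. Every diagonal idempotent e_aaa lies in the
  middle nucleus {A. (u A) v = u (A v)}, whose elements are supported on the diagonal, and an
  automorphism phi preserves the nucleus. So phi(e_aaa) is a diagonal function whose values are
  orthogonal idempotents of R; since R is indecomposable they are 0 or 1, which forces
  phi(e_aaa) = e_bbb for b = pi a and a permutation pi of P. The relations
  e_aaa e_aab = e_aab, e_abb e_bbb = e_abb, e_aaa (e_aab e_abb) = e_aab, (e_aab e_abb) e_bbb = e_abb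
  then leave phi(e_aab) = k e_(pi a, pi a, pi b) and phi(e_abb) = k e_(pi a, pi b, pi b) with k
  idempotent and nonzero, so k = 1 and pi is monotone, hence an automorphism of the finite poset.
  As e_pqr = e_pqq e_qqr, phi is relabelling by pi on a basis, hence everywhere; conversely
  relabelling gives an isomorphism from Aut(P) onto Aut(I^3(P,R)).
*)

theory Submission
  imports Defs
begin

definition I3_basis :: "'a \<times> 'a \<times> 'a \<Rightarrow> 'a \<times> 'a \<times> 'a \<Rightarrow> 'r::comm_ring_1" where
  "I3_basis t = (\<lambda>s. if s = t then 1 else 0)"

lemma sum_eq_single_term:
  assumes "finite S" "\<And>p. p \<in> S \<Longrightarrow> p \<noteq> k \<Longrightarrow> h p = 0"
  shows "sum h S = (if k \<in> S then h k else (0::'b::comm_monoid_add))"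
proof (cases "k \<in> S")
  case True
  then have "sum h S = h k + sum h (S - {k})" using assms(1) by (simp add: sum.remove)
  also have "sum h (S - {k}) = 0" using assms(2) by (intro sum.neutral) auto
  finally show ?thesis using True by simp
next
  case False
  then have "sum h S = 0" using assms(2) by (intro sum.neutral) blast
  then show ?thesis using False by simp
qed

lemma I3_mult_single_term:
  fixes f g :: "'a::{finite,order} \<times> 'a \<times> 'a \<Rightarrow> 'r::comm_ring_1"
  assumes "\<And>y1 y2. x1 \<le> y1 \<Longrightarrow> y1 \<le> x2 \<Longrightarrow> x2 \<le> y2 \<Longrightarrow> y2 \<le> x3 \<Longrightarrow> (y1, y2) \<noteq> (c, d)
     \<Longrightarrow> f (x1, y1, y2) * g (y1, y2, x3) = 0"
  shows "I3_mult f g (x1, x2, x3) =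
    (if x1 \<le> c \<and> c \<le> x2 \<and> x2 \<le> d \<and> d \<le> x3 then f (x1, c, d) * g (c, d, x3) else 0)"
proof -
  let ?S = "{(y1, y2). x1 \<le> y1 \<and> y1 \<le> x2 \<and> x2 \<le> y2 \<and> y2 \<le> x3}"
  have "(\<Sum>(y1, y2) \<in> ?S. f (x1, y1, y2) * g (y1, y2, x3)) =
     (if (c, d) \<in> ?S then f (x1, c, d) * g (c, d, x3) else 0)"
    by (subst sum_eq_single_term[where k = "(c, d)"]) (use assms in auto)
  then show ?thesis unfolding I3_mult_def by (auto intro: order_trans)
qed

lemma I3_mult_in_I3: "I3_mult f g \<in> I3"
  unfolding I3_def I3_mult_def by auto

lemma zero_in_I3: "(\<lambda>_. 0) \<in> I3"
  unfolding I3_def by auto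

lemma I3_basis_in_I3: "x \<le> y \<Longrightarrow> y \<le> z \<Longrightarrow> I3_basis (x, y, z) \<in> I3"
  unfolding I3_def I3_basis_def by auto

lemma I3_basis_diag_in_I3: "I3_basis (a, a, a) \<in> I3"
  by (rule I3_basis_in_I3) auto

lemma I3_basis_nonzero: "(0::'r::comm_ring_1) \<noteq> 1 \<Longrightarrow> (I3_basis t :: _ \<Rightarrow> 'r) \<noteq> (\<lambda>_. 0)"
  unfolding I3_basis_def by (metis (full_types))

lemma I3_basis_eq_iff: "(0::'r::comm_ring_1) \<noteq> 1 \<Longrightarrow> (I3_basis s :: _ \<Rightarrow> 'r) = I3_basis t \<longleftrightarrow> s = t"
  unfolding I3_basis_def by (metis (full_types))

lemma I3_decompose:
  assumes "(f :: 'a::{finite,order} \<times> 'a \<times> 'a \<Rightarrow> 'r::comm_ring_1) \<in> I3"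
  shows "f = (\<lambda>s. \<Sum>t\<in>{(x, y, z). x \<le> y \<and> y \<le> z}. f t * I3_basis t s)"
proof
  fix s :: "'a \<times> 'a \<times> 'a"
  show "f s = (\<Sum>t\<in>{(x, y, z). x \<le> y \<and> y \<le> z}. f t * I3_basis t s)"
    by (subst sum_eq_single_term[where k = s])
      (use assms in \<open>auto simp: I3_basis_def I3_def split: prod.splits\<close>)
qed

lemma I3_mult_basis_left:
  "I3_mult (I3_basis (\<alpha>, \<beta>, \<gamma>)) (f :: 'a::{finite,order} \<times> 'a \<times> 'a \<Rightarrow> 'r::comm_ring_1) (x1, x2, x3) =
   (if x1 = \<alpha> \<and> x1 \<le> \<beta> \<and> \<beta> \<le> x2 \<and> x2 \<le> \<gamma> \<and> \<gamma> \<le> x3 then f (\<beta>, \<gamma>, x3) else 0)"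
  by (subst I3_mult_single_term[where c = \<beta> and d = \<gamma>]) (auto simp: I3_basis_def)

lemma I3_mult_basis_right:
  "I3_mult (f :: 'a::{finite,order} \<times> 'a \<times> 'a \<Rightarrow> 'r::comm_ring_1) (I3_basis (\<mu>, \<nu>, \<rho>)) (x1, x2, x3) =
   (if x3 = \<rho> \<and> x1 \<le> \<mu> \<and> \<mu> \<le> x2 \<and> x2 \<le> \<nu> \<and> \<nu> \<le> x3 then f (x1, \<mu>, \<nu>) else 0)"
  by (subst I3_mult_single_term[where c = \<mu> and d = \<nu>]) (auto simp: I3_basis_def)

lemma I3_mult_diag_left:
  "I3_mult (I3_basis (a, a, a)) (f :: 'a::{finite,order} \<times> 'a \<times> 'a \<Rightarrow> 'r::comm_ring_1) (x1, x2, x3) =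
   (if x1 = a \<and> x2 = a \<and> a \<le> x3 then f (a, a, x3) else 0)"
  by (auto simp: I3_mult_basis_left dest: antisym)

lemma I3_mult_diag_right:
  "I3_mult (f :: 'a::{finite,order} \<times> 'a \<times> 'a \<Rightarrow> 'r::comm_ring_1) (I3_basis (a, a, a)) (x1, x2, x3) =
   (if x2 = a \<and> x3 = a \<and> x1 \<le> a then f (x1, a, a) else 0)"
  by (auto simp: I3_mult_basis_right dest: antisym)

lemma I3_mult_at_diag:
  "I3_mult (f :: 'a::{finite,order} \<times> 'a \<times> 'a \<Rightarrow> 'r::comm_ring_1) g (y, y, y) = f (y, y, y) * g (y, y, y)"
  by (subst I3_mult_single_term[where c = y and d = y]) (auto dest: antisym)

lemma I3_basis_mult_diag:
  "I3_mult (I3_basis (a, a, a)) (I3_basis (b, b, b)) =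
   (if a = b then I3_basis (a, a, a) else (\<lambda>_. 0 :: 'r::comm_ring_1))"
  by (auto simp: fun_eq_iff I3_mult_diag_left) (auto simp: I3_basis_def)

lemma I3_basis_mult_chain:
  assumes "p \<le> q" "q \<le> r"
  shows "I3_mult (I3_basis (p, q, q)) (I3_basis (q, q, r)) =
    (I3_basis (p, q, r) :: 'a::{finite,order} \<times> 'a \<times> 'a \<Rightarrow> 'r::comm_ring_1)"
  using assms by (auto simp: fun_eq_iff I3_mult_basis_left) (auto simp: I3_basis_def)

lemma I3_basis_flag_relations:
  fixes a b :: "'a::{finite,order}"
  assumes "a \<le> b"
  defines "g \<equiv> I3_basis (a, a, b) :: 'a \<times> 'a \<times> 'a \<Rightarrow> 'r::comm_ring_1"
    and "h \<equiv> I3_basis (a, b, b) :: 'a \<times> 'a \<times> 'a \<Rightarrow> 'r"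
  shows "I3_mult (I3_basis (a, a, a)) g = g" "I3_mult h (I3_basis (b, b, b)) = h"
    and "I3_mult (I3_basis (a, a, a)) (I3_mult g h) = g"
    and "I3_mult (I3_mult g h) (I3_basis (b, b, b)) = h"
  using assms unfolding g_def h_def fun_eq_iff
  by (auto simp: I3_mult_diag_left I3_mult_diag_right I3_mult_basis_left) (auto simp: I3_basis_def)

definition I3_middle_nucleus :: "('a::{finite,order} \<times> 'a \<times> 'a \<Rightarrow> 'r::comm_ring_1) set" where
  "I3_middle_nucleus =
     {A \<in> I3. \<forall>u\<in>I3. \<forall>v\<in>I3. I3_mult (I3_mult u A) v = I3_mult u (I3_mult A v)}"

lemma I3_basis_diag_in_middle_nucleus:
  "(I3_basis (a, a, a) :: 'a::{finite,order} \<times> 'a \<times> 'a \<Rightarrow> 'r::comm_ring_1) \<in> I3_middle_nucleus"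
proof -
  have "I3_mult (I3_mult u (I3_basis (a, a, a))) v (x1, x2, x3) =
        I3_mult u (I3_mult (I3_basis (a, a, a)) v) (x1, x2, x3)" for u v :: "_ \<Rightarrow> 'r" and x1 x2 x3
  proof -
    have "I3_mult (I3_mult u (I3_basis (a, a, a))) v (x1, x2, x3) =
      (if x1 \<le> a \<and> a \<le> x2 \<and> x2 \<le> a \<and> a \<le> x3
       then I3_mult u (I3_basis (a, a, a)) (x1, a, a) * v (a, a, x3) else 0)"
      by (rule I3_mult_single_term) (auto simp: I3_mult_diag_right)
    moreover have "I3_mult u (I3_mult (I3_basis (a, a, a)) v) (x1, x2, x3) =
      (if x1 \<le> a \<and> a \<le> x2 \<and> x2 \<le> a \<and> a \<le> x3
       then u (x1, a, a) * I3_mult (I3_basis (a, a, a)) v (a, a, x3) else 0)"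
      by (rule I3_mult_single_term) (auto simp: I3_mult_diag_left)
    ultimately show ?thesis by (auto simp: I3_mult_diag_left I3_mult_diag_right dest: antisym)
  qed
  then show ?thesis
    unfolding I3_middle_nucleus_def by (auto simp: fun_eq_iff I3_basis_diag_in_I3)
qed

text \<open>Off the diagonal, one bracketing of e_ppq A e_qrr has the coefficient A(p,q,r) at
  (p,r,r) (if q < r) or at (p,p,r) (if p < q), while the other bracketing vanishes there.\<close>

lemma I3_middle_nucleus_diagonal:
  assumes A: "A \<in> I3_middle_nucleus" and nz: "A (p, q, r) \<noteq> 0"
  shows "p = q \<and> q = r"
proof (rule ccontr)
  assume off_diag: "\<not> (p = q \<and> q = r)"
  have "p \<le> q" "q \<le> r" using A nz unfolding I3_middle_nucleus_def I3_def by blast+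
  then have assoc: "I3_mult (I3_mult (I3_basis (p, p, q)) A) (I3_basis (q, r, r)) =
      I3_mult (I3_basis (p, p, q)) (I3_mult A (I3_basis (q, r, r)))"
    using A unfolding I3_middle_nucleus_def by (auto intro: I3_basis_in_I3)
  show False
  proof (cases "q = r")
    case True
    with off_diag \<open>p \<le> q\<close> have "\<not> q \<le> p" by auto
    from fun_cong[OF assoc, of "(p, p, r)"] show False
      using nz True \<open>p \<le> q\<close> \<open>\<not> q \<le> p\<close> by (auto simp: I3_mult_basis_left I3_mult_basis_right)
  next
    case False
    with \<open>q \<le> r\<close> have "\<not> r \<le> q" by auto
    from fun_cong[OF assoc, of "(p, r, r)"] show False
      using nz \<open>p \<le> q\<close> \<open>q \<le> r\<close> \<open>\<not> r \<le> q\<close> by (auto simp: I3_mult_basis_left I3_mult_basis_right)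
  qed
qed

lemma I3_flag_pair_shape:
  fixes g h :: "'a::{finite,order} \<times> 'a \<times> 'a \<Rightarrow> 'r::comm_ring_1"
  assumes g_left: "I3_mult (I3_basis (c, c, c)) g = g"
    and h_right: "I3_mult h (I3_basis (d, d, d)) = h"
    and g_gh: "I3_mult (I3_basis (c, c, c)) (I3_mult g h) = g"
    and h_gh: "I3_mult (I3_mult g h) (I3_basis (d, d, d)) = h"
  shows "g (x1, x2, x3) = (if (x1, x2, x3) = (c, c, d) \<and> c \<le> d then g (c, c, d) * h (c, d, d) else 0)"
    and "h (x1, x2, x3) = (if (x1, x2, x3) = (c, d, d) \<and> c \<le> d then g (c, c, d) * h (c, d, d) else 0)"
proof -
  have g_supp: "g (y1, y2, y3) = 0" if "\<not> (y1 = c \<and> y2 = c)" for y1 y2 y3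
    using that fun_cong[OF g_left, of "(y1, y2, y3)"] by (auto simp: I3_mult_diag_left)
  have h_supp: "h (y1, y2, y3) = 0" if "\<not> (y2 = d \<and> y3 = d)" for y1 y2 y3
    using that fun_cong[OF h_right, of "(y1, y2, y3)"] by (auto simp: I3_mult_diag_right)
  have gh: "I3_mult g h (y1, y2, y3) =
    (if y1 \<le> c \<and> c \<le> y2 \<and> y2 \<le> d \<and> d \<le> y3 then g (y1, c, d) * h (c, d, y3) else 0)" for y1 y2 y3
    by (rule I3_mult_single_term) (use g_supp h_supp in auto)
  have "g (x1, x2, x3) = I3_mult (I3_basis (c, c, c)) (I3_mult g h) (x1, x2, x3)"
    by (simp add: g_gh)
  also have "\<dots> = (if x1 = c \<and> x2 = c \<and> c \<le> x3 then I3_mult g h (c, c, x3) else 0)"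
    by (rule I3_mult_diag_left)
  finally show "g (x1, x2, x3) = (if (x1, x2, x3) = (c, c, d) \<and> c \<le> d then g (c, c, d) * h (c, d, d) else 0)"
    by (cases "x3 = d") (auto simp: gh h_supp)
  have "h (x1, x2, x3) = I3_mult (I3_mult g h) (I3_basis (d, d, d)) (x1, x2, x3)"
    by (simp add: h_gh)
  also have "\<dots> = (if x2 = d \<and> x3 = d \<and> x1 \<le> d then I3_mult g h (x1, d, d) else 0)"
    by (rule I3_mult_diag_right)
  finally show "h (x1, x2, x3) = (if (x1, x2, x3) = (c, d, d) \<and> c \<le> d then g (c, c, d) * h (c, d, d) else 0)"
    by (cases "x1 = c") (auto simp: gh g_supp intro: order_trans)
qed

definition order_aut :: "('a::order \<Rightarrow> 'a) \<Rightarrow> bool" where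
  "order_aut \<sigma> \<longleftrightarrow> bij \<sigma> \<and> (\<forall>x y. x \<le> y \<longleftrightarrow> \<sigma> x \<le> \<sigma> y)"

lemma Aut_poset_simps:
  "carrier (Aut_poset TYPE('a::order)) = Collect order_aut"
  "\<sigma> \<otimes>\<^bsub>Aut_poset TYPE('a)\<^esub> \<tau> = \<sigma> \<circ> \<tau>"
  "\<one>\<^bsub>Aut_poset TYPE('a)\<^esub> = id"
  by (auto simp: Aut_poset_def order_aut_def)

lemma order_aut_le_iff: "order_aut \<sigma> \<Longrightarrow> \<sigma> x \<le> \<sigma> y \<longleftrightarrow> x \<le> y"
  unfolding order_aut_def by blast

lemma order_aut_comp: "order_aut \<sigma> \<Longrightarrow> order_aut \<tau> \<Longrightarrow> order_aut (\<sigma> \<circ> \<tau>)"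
  unfolding order_aut_def by (auto intro: bij_comp)

lemma order_aut_inv:
  assumes "order_aut \<sigma>"
  shows "order_aut (inv_into UNIV \<sigma>)"
    and "\<sigma> (inv_into UNIV \<sigma> x) = x" and "inv_into UNIV \<sigma> (\<sigma> x) = x"
proof -
  have "bij \<sigma>" using assms unfolding order_aut_def by blast
  then show right: "\<sigma> (inv_into UNIV \<sigma> x) = x" for x
    by (simp add: bij_is_surj surj_f_inv_f)
  show "inv_into UNIV \<sigma> (\<sigma> x) = x"
    using \<open>bij \<sigma>\<close> by (simp add: bij_is_inj)
  show "order_aut (inv_into UNIV \<sigma>)"
    unfolding order_aut_def
    using \<open>bij \<sigma>\<close> bij_imp_bij_inv assms right by (metis order_aut_le_iff)
qed

lemma finite_mono_inj_le_iff:
  fixes f :: "'a::{finite,order} \<Rightarrow> 'a"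
  assumes "inj f" "mono f"
  shows "f x \<le> f y \<longleftrightarrow> x \<le> y"
proof
  let ?le = "{(u, v). u \<le> (v::'a)}"
  have "map_prod f f ` ?le = ?le"
  proof (rule endo_inj_surj)
    show "finite ?le" by simp
    show "map_prod f f ` ?le \<subseteq> ?le" using \<open>mono f\<close> by (auto dest: monoD)
    show "inj_on (map_prod f f) ?le" using \<open>inj f\<close> by (auto intro: inj_on_subset map_prod_inj_on)
  qed
  moreover assume "f x \<le> f y"
  ultimately obtain u v where "u \<le> v" "f x = f u" "f y = f v" by force
  with \<open>inj f\<close> show "x \<le> y" by (auto dest: injD)
qed (use \<open>mono f\<close> in \<open>rule monoD\<close>)

lemma group_Aut_poset: "group (Aut_poset TYPE('a::order))"
proof (rule groupI)
  fix \<sigma> assume "\<sigma> \<in> carrier (Aut_poset TYPE('a))"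
  then have \<sigma>: "order_aut \<sigma>" by (simp add: Aut_poset_simps)
  have "inv_into UNIV \<sigma> \<in> carrier (Aut_poset TYPE('a))"
    using order_aut_inv(1)[OF \<sigma>] by (simp add: Aut_poset_simps)
  moreover have "inv_into UNIV \<sigma> \<otimes>\<^bsub>Aut_poset TYPE('a)\<^esub> \<sigma> = \<one>\<^bsub>Aut_poset TYPE('a)\<^esub>"
    using order_aut_inv(3)[OF \<sigma>] by (simp add: Aut_poset_simps fun_eq_iff)
  ultimately show "\<exists>\<tau>\<in>carrier (Aut_poset TYPE('a)). \<tau> \<otimes>\<^bsub>Aut_poset TYPE('a)\<^esub> \<sigma> = \<one>\<^bsub>Aut_poset TYPE('a)\<^esub>"
    by blast
qed (simp_all add: Aut_poset_simps order_aut_comp o_assoc order_aut_def[of id])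

text \<open>Relabelling through the inverse makes \<sigma> \<mapsto> I3_relabel \<sigma> a homomorphism rather than an
  anti-homomorphism; the restriction to I3 matches the extensionality required in I3_auts.\<close>

definition I3_relabel :: "('a::{finite,order} \<Rightarrow> 'a) \<Rightarrow> ('a \<times> 'a \<times> 'a \<Rightarrow> 'r::comm_ring_1) \<Rightarrow> ('a \<times> 'a \<times> 'a \<Rightarrow> 'r)" where
  "I3_relabel \<sigma> = (\<lambda>f\<in>I3. \<lambda>(x, y, z). f (inv_into UNIV \<sigma> x, inv_into UNIV \<sigma> y, inv_into UNIV \<sigma> z))"

lemma I3_relabel_apply:
  "f \<in> I3 \<Longrightarrow> I3_relabel \<sigma> f (x, y, z) = f (inv_into UNIV \<sigma> x, inv_into UNIV \<sigma> y, inv_into UNIV \<sigma> z)"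
  by (simp add: I3_relabel_def)

lemma I3_relabel_in_I3:
  assumes "order_aut \<sigma>" "f \<in> I3"
  shows "I3_relabel \<sigma> f \<in> I3"
  using assms(2) order_aut_le_iff[OF order_aut_inv(1)[OF assms(1)]]
  unfolding I3_def by (auto simp: I3_relabel_apply[OF assms(2)])

lemma I3_relabel_comp:
  assumes "order_aut \<sigma>" "order_aut \<tau>"
  shows "compose I3 (I3_relabel \<sigma>) (I3_relabel \<tau>) = I3_relabel (\<sigma> \<circ> \<tau>)"
proof
  fix f :: "'a \<times> 'a \<times> 'a \<Rightarrow> 'b"
  have "inv_into UNIV (\<sigma> \<circ> \<tau>) = inv_into UNIV \<tau> \<circ> inv_into UNIV \<sigma>"
    using assms by (simp add: order_aut_def o_inv_distrib)
  then show "compose I3 (I3_relabel \<sigma>) (I3_relabel \<tau>) f = I3_relabel (\<sigma> \<circ> \<tau>) f"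
    using I3_relabel_in_I3[OF assms(2), of f]
    by (auto simp: compose_def I3_relabel_def fun_eq_iff)
qed

lemma I3_relabel_basis_diag:
  "order_aut \<sigma> \<Longrightarrow> I3_relabel \<sigma> (I3_basis (a, a, a)) = I3_basis (\<sigma> a, \<sigma> a, \<sigma> a)"
  unfolding fun_eq_iff I3_basis_def
  by (auto simp: I3_relabel_apply[OF I3_basis_diag_in_I3, unfolded I3_basis_def] order_aut_inv)
    (metis order_aut_inv(2))+

lemma I3_mult_relabel_points:
  fixes f g :: "'a::{finite,order} \<times> 'a \<times> 'a \<Rightarrow> 'r::comm_ring_1"
  assumes "order_aut s"
  shows "I3_mult f g (s x1, s x2, s x3) =
    I3_mult (\<lambda>(a, b, c). f (s a, s b, s c)) (\<lambda>(a, b, c). g (s a, s b, s c)) (x1, x2, x3)"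
proof -
  let ?t = "inv_into UNIV s"
  have le: "s a \<le> s b \<longleftrightarrow> a \<le> b" for a b by (rule order_aut_le_iff[OF assms])
  have inv_le: "?t a \<le> b \<longleftrightarrow> a \<le> s b" "b \<le> ?t a \<longleftrightarrow> s b \<le> a" for a b
    using le[of "?t a" b] le[of b "?t a"] by (simp_all add: order_aut_inv(2)[OF assms])
  have "(\<Sum>(y1, y2) \<in> {(y1, y2). s x1 \<le> y1 \<and> y1 \<le> s x2 \<and> s x2 \<le> y2 \<and> y2 \<le> s x3}.
          f (s x1, y1, y2) * g (y1, y2, s x3)) =
        (\<Sum>(y1, y2) \<in> {(y1, y2). x1 \<le> y1 \<and> y1 \<le> x2 \<and> x2 \<le> y2 \<and> y2 \<le> x3}.
          f (s x1, s y1, s y2) * g (s y1, s y2, s x3))"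
    by (rule sum.reindex_bij_witness[where i = "map_prod s s" and j = "map_prod ?t ?t"])
      (auto simp: le inv_le order_aut_inv[OF assms])
  then show ?thesis unfolding I3_mult_def by (simp add: le)
qed

lemma I3_relabel_mult:
  assumes "order_aut \<sigma>" "f \<in> I3" "g \<in> I3"
  shows "I3_relabel \<sigma> (I3_mult f g) = I3_mult (I3_relabel \<sigma> f) (I3_relabel \<sigma> g)"
  using assms I3_mult_relabel_points[OF order_aut_inv(1)[OF assms(1)], of f g]
  by (auto simp: fun_eq_iff I3_relabel_def I3_mult_in_I3)

lemma I3_relabel_in_auts:
  assumes \<sigma>: "order_aut \<sigma>"
  shows "I3_relabel \<sigma> \<in> I3_auts"
proof -
  note inv = order_aut_inv[OF \<sigma>]
  have "bij_betw (I3_relabel \<sigma>) I3 I3"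
  proof (rule bij_betwI[where g = "I3_relabel (inv_into UNIV \<sigma>)"])
    show "I3_relabel \<sigma> \<in> I3 \<rightarrow> I3" "I3_relabel (inv_into UNIV \<sigma>) \<in> I3 \<rightarrow> I3"
      using I3_relabel_in_I3 \<sigma> inv(1) by blast+
    show "I3_relabel (inv_into UNIV \<sigma>) (I3_relabel \<sigma> f) = f"
      and "I3_relabel \<sigma> (I3_relabel (inv_into UNIV \<sigma>) f) = f" if "f \<in> I3" for f
      using that I3_relabel_in_I3[OF \<sigma> that] I3_relabel_in_I3[OF inv(1) that] inv
      by (auto simp: fun_eq_iff I3_relabel_apply order_aut_inv[OF inv(1)])
  qed
  moreover have "I3_relabel \<sigma> (\<lambda>t. f t + g t) = (\<lambda>t. I3_relabel \<sigma> f t + I3_relabel \<sigma> g t)"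
    if "f \<in> I3" "g \<in> I3" for f g :: "'a \<times> 'a \<times> 'a \<Rightarrow> 'b"
    using that by (auto simp: fun_eq_iff I3_relabel_def I3_def)
  moreover have "I3_relabel \<sigma> (I3_smult r f) = I3_smult r (I3_relabel \<sigma> f)"
    if "f \<in> I3" for f :: "'a \<times> 'a \<times> 'a \<Rightarrow> 'b" and r
    using that by (auto simp: fun_eq_iff I3_relabel_def I3_def I3_smult_def)
  moreover have "I3_relabel \<sigma> \<in> extensional I3"
    unfolding I3_relabel_def by (rule restrict_extensional)
  ultimately show ?thesis
    unfolding I3_auts_def using I3_relabel_mult[OF \<sigma>] by blast
qed

locale I3_automorphism =
  fixes \<phi> :: "('a::{finite,order} \<times> 'a \<times> 'a \<Rightarrow> 'r::comm_ring_1) \<Rightarrow> ('a \<times> 'a \<times> 'a \<Rightarrow> 'r)"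
  assumes aut: "\<phi> \<in> I3_auts"
    and indecomposable: "indecomposable_ring TYPE('r)"
begin

lemma zero_neq_one_scalars: "(0::'r) \<noteq> 1"
  using indecomposable unfolding indecomposable_ring_def by blast

lemma idempotent_cases: "(e::'r) * e = e \<Longrightarrow> e = 0 \<or> e = 1"
  using indecomposable unfolding indecomposable_ring_def by blast

lemma bij_on_I3: "bij_betw \<phi> I3 I3"
  using aut unfolding I3_auts_def by blast

lemma maps_I3: "f \<in> I3 \<Longrightarrow> \<phi> f \<in> I3"
  using bij_on_I3 bij_betwE by blast

lemma preserves_add: "f \<in> I3 \<Longrightarrow> g \<in> I3 \<Longrightarrow> \<phi> (\<lambda>t. f t + g t) = (\<lambda>t. \<phi> f t + \<phi> g t)"
  using aut unfolding I3_auts_def by blast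

lemma preserves_smult: "f \<in> I3 \<Longrightarrow> \<phi> (I3_smult r f) = I3_smult r (\<phi> f)"
  using aut unfolding I3_auts_def by blast

lemma preserves_mult: "f \<in> I3 \<Longrightarrow> g \<in> I3 \<Longrightarrow> \<phi> (I3_mult f g) = I3_mult (\<phi> f) (\<phi> g)"
  using aut unfolding I3_auts_def by blast

lemma preserves_zero: "\<phi> (\<lambda>_. 0) = (\<lambda>_. 0)"
  using preserves_add[OF zero_in_I3 zero_in_I3] by (simp add: fun_eq_iff)

lemma preserves_nonzero: "f \<in> I3 \<Longrightarrow> f \<noteq> (\<lambda>_. 0) \<Longrightarrow> \<phi> f \<noteq> (\<lambda>_. 0)"
  using bij_on_I3 zero_in_I3 preserves_zero by (metis bij_betw_inv_into_left)

lemma linear_combination: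
  assumes "finite A" "\<And>t. t \<in> A \<Longrightarrow> g t \<in> I3"
  shows "\<phi> (\<lambda>s. \<Sum>t\<in>A. c t * g t s) = (\<lambda>s. \<Sum>t\<in>A. c t * \<phi> (g t) s)"
  using assms
proof (induction A rule: finite_induct)
  case empty
  then show ?case by (simp add: preserves_zero)
next
  case (insert t A)
  have scaled: "I3_smult (c t) (g t) \<in> I3"
    using insert.prems[of t] unfolding I3_def I3_smult_def by simp
  have rest: "(\<lambda>s. \<Sum>t\<in>A. c t * g t s) \<in> I3"
    using insert.prems unfolding I3_def by (simp add: sum.neutral)
  have scale: "\<phi> (\<lambda>s. c t * g t s) = (\<lambda>s. c t * \<phi> (g t) s)"
    using preserves_smult[OF insert.prems[of t]] by (simp add: I3_smult_def)
  have "\<phi> (\<lambda>s. \<Sum>t\<in>insert t A. c t * g t s) =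
        \<phi> (\<lambda>s. I3_smult (c t) (g t) s + (\<Sum>t\<in>A. c t * g t s))"
    using insert.hyps by (simp add: I3_smult_def)
  also have "\<dots> = (\<lambda>s. \<phi> (I3_smult (c t) (g t)) s + \<phi> (\<lambda>s. \<Sum>t\<in>A. c t * g t s) s)"
    by (rule preserves_add[OF scaled rest])
  also have "\<dots> = (\<lambda>s. \<Sum>t\<in>insert t A. c t * \<phi> (g t) s)"
    using insert.IH insert.prems insert.hyps by (simp add: scale I3_smult_def)
  finally show ?case .
qed

lemma maps_middle_nucleus:
  assumes A: "A \<in> I3_middle_nucleus"
  shows "\<phi> A \<in> I3_middle_nucleus"
  unfolding I3_middle_nucleus_def
proof (intro CollectI conjI ballI)
  have A_I3: "A \<in> I3" using A unfolding I3_middle_nucleus_def by blast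
  then show "\<phi> A \<in> I3" by (rule maps_I3)
  fix u v :: "'a \<times> 'a \<times> 'a \<Rightarrow> 'r"
  assume "u \<in> I3" "v \<in> I3"
  moreover have "\<phi> ` I3 = I3" using bij_on_I3 by (rule bij_betw_imp_surj_on)
  ultimately obtain u' v' where u': "u' \<in> I3" "u = \<phi> u'" and v': "v' \<in> I3" "v = \<phi> v'"
    by (metis imageE)
  have "I3_mult (I3_mult u (\<phi> A)) v = \<phi> (I3_mult (I3_mult u' A) v')"
    using u' v' A_I3 by (simp add: preserves_mult I3_mult_in_I3)
  also have "\<dots> = \<phi> (I3_mult u' (I3_mult A v'))"
    using A u' v' unfolding I3_middle_nucleus_def by simp
  also have "\<dots> = I3_mult u (I3_mult (\<phi> A) v)"
    using u' v' A_I3 by (simp add: preserves_mult I3_mult_in_I3)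
  finally show "I3_mult (I3_mult u (\<phi> A)) v = I3_mult u (I3_mult (\<phi> A) v)" .
qed


lemma diag_image_diagonal: "\<phi> (I3_basis (a, a, a)) (p, q, r) \<noteq> 0 \<Longrightarrow> p = q \<and> q = r"
  using I3_middle_nucleus_diagonal maps_middle_nucleus I3_basis_diag_in_middle_nucleus by blast

lemma diag_image_mult:
  "I3_mult (\<phi> (I3_basis (a, a, a))) (\<phi> (I3_basis (b, b, b))) =
   (if a = b then \<phi> (I3_basis (a, a, a)) else (\<lambda>_. 0))"
  unfolding preserves_mult[OF I3_basis_diag_in_I3 I3_basis_diag_in_I3, symmetric]
  by (simp add: I3_basis_mult_diag preserves_zero)

lemma diag_image_zero_or_one: "\<phi> (I3_basis (a, a, a)) (y, y, y) = 0 \<or> \<phi> (I3_basis (a, a, a)) (y, y, y) = 1"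
  using fun_cong[OF diag_image_mult[of a a], of "(y, y, y)"]
  by (intro idempotent_cases) (simp add: I3_mult_at_diag)

lemma diag_image_orthogonal:
  "a \<noteq> b \<Longrightarrow> \<phi> (I3_basis (a, a, a)) (y, y, y) * \<phi> (I3_basis (b, b, b)) (y, y, y) = 0"
  using fun_cong[OF diag_image_mult[of a b], of "(y, y, y)"] by (simp add: I3_mult_at_diag)

lemma diag_image_takes_one: "\<exists>y. \<phi> (I3_basis (a, a, a)) (y, y, y) = 1"
proof -
  have "\<phi> (I3_basis (a, a, a)) \<noteq> (\<lambda>_. 0)"
    using preserves_nonzero[OF I3_basis_diag_in_I3 I3_basis_nonzero[OF zero_neq_one_scalars]] .
  then obtain p q r where "\<phi> (I3_basis (a, a, a)) (p, q, r) \<noteq> 0"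
    by (auto simp: fun_eq_iff)
  with diag_image_diagonal diag_image_zero_or_one show ?thesis by metis
qed

definition induced_perm :: "'a \<Rightarrow> 'a" where
  "induced_perm a = (SOME y. \<phi> (I3_basis (a, a, a)) (y, y, y) = 1)"

lemma diag_image_at_induced_perm:
  "\<phi> (I3_basis (a, a, a)) (induced_perm a, induced_perm a, induced_perm a) = 1"
  unfolding induced_perm_def using diag_image_takes_one by (rule someI_ex)

lemma bij_induced_perm: "bij induced_perm"
proof -
  have "inj induced_perm"
  proof (rule injI, rule ccontr)
    fix a b assume "induced_perm a = induced_perm b" "a \<noteq> b"
    then show False
      using diag_image_orthogonal[of a b "induced_perm a"] diag_image_at_induced_perm[of a]
        diag_image_at_induced_perm[of b] zero_neq_one_scalars by simp
  qed
  then show ?thesis by (simp add: bij_def finite_UNIV_inj_surj)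
qed

lemma image_basis_diag: "\<phi> (I3_basis (a, a, a)) = I3_basis (induced_perm a, induced_perm a, induced_perm a)"
proof (rule ext, clarify)
  fix p q r
  show "\<phi> (I3_basis (a, a, a)) (p, q, r) = I3_basis (induced_perm a, induced_perm a, induced_perm a) (p, q, r)"
  proof (cases "\<phi> (I3_basis (a, a, a)) (p, q, r) = 0")
    case True
    then have "(p, q, r) \<noteq> (induced_perm a, induced_perm a, induced_perm a)"
      using diag_image_at_induced_perm zero_neq_one_scalars by auto
    with True show ?thesis by (simp add: I3_basis_def)
  next
    case False
    then have diag: "q = p" "r = p" and one: "\<phi> (I3_basis (a, a, a)) (p, p, p) = 1"
      using diag_image_diagonal diag_image_zero_or_one by blast+
    obtain b where b: "p = induced_perm b"
      using bij_induced_perm by (metis bij_pointE)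
    have "a = b"
      using diag_image_orthogonal[of a b p] diag_image_at_induced_perm[of b] one b zero_neq_one_scalars
      by auto
    with diag one b show ?thesis by (simp add: I3_basis_def)
  qed
qed

lemma image_basis_flag:
  assumes "a \<le> b"
  shows "\<phi> (I3_basis (a, a, b)) = I3_basis (induced_perm a, induced_perm a, induced_perm b)"
    and "\<phi> (I3_basis (a, b, b)) = I3_basis (induced_perm a, induced_perm b, induced_perm b)"
    and "induced_perm a \<le> induced_perm b"
proof -
  define g where "g = \<phi> (I3_basis (a, a, b))"
  define h where "h = \<phi> (I3_basis (a, b, b))"
  define c where "c = induced_perm a"
  define d where "d = induced_perm b"
  have in_I3: "I3_basis (a, a, b) \<in> I3" "I3_basis (a, b, b) \<in> I3"
    using assms by (auto intro: I3_basis_in_I3)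
  note rel = I3_basis_flag_relations[OF assms, THEN arg_cong[where f = \<phi>]]
  have rels: "I3_mult (I3_basis (c, c, c)) g = g" "I3_mult h (I3_basis (d, d, d)) = h"
    "I3_mult (I3_basis (c, c, c)) (I3_mult g h) = g" "I3_mult (I3_mult g h) (I3_basis (d, d, d)) = h"
    using rel unfolding g_def h_def c_def d_def
    by (simp_all add: in_I3 preserves_mult I3_mult_in_I3 I3_basis_diag_in_I3 image_basis_diag)
  define k where "k = g (c, c, d) * h (c, d, d)"
  note shape = I3_flag_pair_shape[OF rels, folded k_def]
  have "g \<noteq> (\<lambda>_. 0)"
    unfolding g_def by (rule preserves_nonzero[OF in_I3(1) I3_basis_nonzero[OF zero_neq_one_scalars]])
  then obtain x1 x2 x3 where "g (x1, x2, x3) \<noteq> 0"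
    by (metis prod_cases3 ext)
  then have "c \<le> d" "k \<noteq> 0"
    using shape(1)[of x1 x2 x3] by (auto split: if_splits)
  moreover have gk: "g (c, c, d) = k" and hk: "h (c, d, d) = k"
    using shape(1)[of c c d] shape(2)[of c d d] \<open>c \<le> d\<close> by simp_all
  then have "k * k = k"
    using k_def by metis
  ultimately have "k = 1"
    using idempotent_cases by blast
  then show "g = I3_basis (c, c, d)" "h = I3_basis (c, d, d)"
    using \<open>c \<le> d\<close> by (simp_all add: fun_eq_iff shape I3_basis_def)
  show "c \<le> d" by fact
qed

lemma image_basis:
  assumes "p \<le> q" "q \<le> r"
  shows "\<phi> (I3_basis (p, q, r)) = I3_basis (induced_perm p, induced_perm q, induced_perm r)"
proof -
  have "\<phi> (I3_basis (p, q, r)) = \<phi> (I3_mult (I3_basis (p, q, q)) (I3_basis (q, q, r)))"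
    by (simp add: I3_basis_mult_chain[OF assms])
  also have "\<dots> = I3_mult (\<phi> (I3_basis (p, q, q))) (\<phi> (I3_basis (q, q, r)))"
    using assms by (intro preserves_mult I3_basis_in_I3) auto
  also have "\<dots> = I3_basis (induced_perm p, induced_perm q, induced_perm r)"
    using image_basis_flag[OF assms(1)] image_basis_flag[OF assms(2)]
    by (simp add: I3_basis_mult_chain)
  finally show ?thesis .
qed

lemma order_aut_induced_perm: "order_aut induced_perm"
proof -
  have "mono induced_perm"
    using image_basis_flag(3) by (rule monoI)
  then show ?thesis
    unfolding order_aut_def using bij_induced_perm finite_mono_inj_le_iff[of induced_perm]
    by (simp add: bij_is_inj)
qed

lemma image_at_induced_perm:
  assumes "f \<in> I3"
  shows "\<phi> f (induced_perm x, induced_perm y, induced_perm z) = f (x, y, z)"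
proof -
  let ?T = "{(x, y, z). x \<le> y \<and> y \<le> z} :: ('a \<times> 'a \<times> 'a) set"
  have basis: "\<phi> (I3_basis t) (induced_perm x, induced_perm y, induced_perm z) = I3_basis t (x, y, z)"
    if "t \<in> ?T" for t
    using that image_basis bij_induced_perm
    by (auto simp: I3_basis_def bij_is_inj inj_eq split: prod.splits)
  have "\<phi> f = \<phi> (\<lambda>s. \<Sum>t\<in>?T. f t * I3_basis t s)"
    using I3_decompose[OF assms] by simp
  also have "\<dots> = (\<lambda>s. \<Sum>t\<in>?T. f t * \<phi> (I3_basis t) s)"
    by (rule linear_combination) (auto intro: I3_basis_in_I3)
  finally have "\<phi> f (induced_perm x, induced_perm y, induced_perm z) =
      (\<Sum>t\<in>?T. f t * \<phi> (I3_basis t) (induced_perm x, induced_perm y, induced_perm z))"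
    by simp
  also have "\<dots> = (\<Sum>t\<in>?T. f t * I3_basis t (x, y, z))"
    by (rule sum.cong) (simp_all add: basis)
  also have "\<dots> = f (x, y, z)"
    using fun_cong[OF I3_decompose[OF assms], of "(x, y, z)"] by simp
  finally show ?thesis .
qed

lemma eq_I3_relabel: "\<phi> = I3_relabel induced_perm"
proof
  fix f :: "'a \<times> 'a \<times> 'a \<Rightarrow> 'r"
  show "\<phi> f = I3_relabel induced_perm f"
  proof (cases "f \<in> I3")
    case True
    note inv = order_aut_inv[OF order_aut_induced_perm]
    show ?thesis
    proof (rule ext, clarify)
      fix x y z
      show "\<phi> f (x, y, z) = I3_relabel induced_perm f (x, y, z)"
        using image_at_induced_perm[OF True, of "inv_into UNIV induced_perm x"
            "inv_into UNIV induced_perm y" "inv_into UNIV induced_perm z"]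
        by (simp add: I3_relabel_apply[OF True] inv(2))
    qed
  next
    case False
    have "\<phi> \<in> extensional I3" using aut by (simp add: I3_auts_def)
    with False show ?thesis by (simp add: I3_relabel_def extensional_def)
  qed
qed

end

lemma I3_relabel_iso:
  assumes indecomposable: "indecomposable_ring TYPE('r::comm_ring_1)"
  shows "(I3_relabel :: _ \<Rightarrow> ('a::{finite,order} \<times> 'a \<times> 'a \<Rightarrow> 'r) \<Rightarrow> _)
    \<in> iso (Aut_poset TYPE('a)) (Aut_I3 TYPE('a \<times> 'a \<times> 'a \<Rightarrow> 'r))"
proof (rule isoI)
  let ?R = "I3_relabel :: _ \<Rightarrow> ('a \<times> 'a \<times> 'a \<Rightarrow> 'r) \<Rightarrow> _"
  show "?R \<in> hom (Aut_poset TYPE('a)) (Aut_I3 TYPE('a \<times> 'a \<times> 'a \<Rightarrow> 'r))"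
    unfolding hom_def
    by (auto simp: Aut_poset_simps Aut_I3_def I3_relabel_in_auts I3_relabel_comp)
  have "inj_on ?R (Collect order_aut)"
  proof (rule inj_onI, rule ext)
    fix \<sigma> \<tau> a assume "\<sigma> \<in> Collect order_aut" "\<tau> \<in> Collect order_aut" "?R \<sigma> = ?R \<tau>"
    then have "(I3_basis (\<sigma> a, \<sigma> a, \<sigma> a) :: _ \<Rightarrow> 'r) = I3_basis (\<tau> a, \<tau> a, \<tau> a)"
      by (metis I3_relabel_basis_diag mem_Collect_eq)
    moreover have "(0::'r) \<noteq> 1"
      using indecomposable unfolding indecomposable_ring_def by blast
    ultimately show "\<sigma> a = \<tau> a" by (simp add: I3_basis_eq_iff)
  qed
  moreover have "?R ` Collect order_aut = I3_auts"
  proof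
    show "?R ` Collect order_aut \<subseteq> I3_auts" using I3_relabel_in_auts by blast
    show "I3_auts \<subseteq> ?R ` Collect order_aut"
    proof
      fix \<phi> :: "('a \<times> 'a \<times> 'a \<Rightarrow> 'r) \<Rightarrow> _" assume "\<phi> \<in> I3_auts"
      then interpret I3_automorphism \<phi> using indecomposable by unfold_locales
      show "\<phi> \<in> ?R ` Collect order_aut"
        using eq_I3_relabel order_aut_induced_perm by blast
    qed
  qed
  ultimately show "bij_betw ?R (carrier (Aut_poset TYPE('a))) (carrier (Aut_I3 TYPE('a \<times> 'a \<times> 'a \<Rightarrow> 'r)))"
    by (simp add: bij_betw_def Aut_poset_simps Aut_I3_def)
qed

theorem corollary3p20:
  assumes "indecomposable_ring TYPE('r::comm_ring_1)"
  shows "Aut_I3 TYPE('a::{finite,order} \<times> 'a \<times> 'a \<Rightarrow> 'r) \<cong> Aut_poset TYPE('a)"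
proof -
  have "Aut_poset TYPE('a) \<cong> Aut_I3 TYPE('a \<times> 'a \<times> 'a \<Rightarrow> 'r)"
    using I3_relabel_iso[OF assms] by (rule is_isoI)
  then show ?thesis by (rule group.iso_sym[OF group_Aut_poset])
qed

end
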